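(* In Algorithm MC (with $|b_j(v)|\le\deg(v)$ for all $v,j$ and $\alpha\in(0,1/4]$), for every $j\in[k]$ and every $i\ge0$ such that rounds $1,\dots,i$ have computed $r^1,\dots,r^i$, we have $\sum_{v\in V}|r^{\le i}_{v,j}|\cdot\deg(v)\le i\cdot\|b_j\|_1$.
   Context: Let $G=(V,E)$ be a unit-capacity undirected graph, $n=|V|\ge3$, every vertex of degree $\deg(v)\ge1$, each edge with a fixed arbitrary orientation; $B\in\mathbb R^{V\times E}$ is the incidence matrix (column $(u,v)$ has $+1$ in row $u$, $-1$ in row $v$, $0$ elsewhere). Algorithm MC takes $k\ge1$, $b=(b_1,\dots,b_k)\in\mathbb R^{V\times[k]}$ with $|b_j(v)|\le\deg(v)$ for all $v,j$, $\alpha\in(0,1/4]$ and an integer $T\ge1$. Set $w^1_{v,j,+}=w^1_{v,j,-}=1$. For $i=1,\dots,T$: (1) $\tilde w^i_{v,j,\circ}=w^i_{v,j,\circ}$ if $w^i_{v,j,\circ}\ge n$ and $0$ otherwise ($\circ\in\{+,-\}$); (2) $\tilde\phi^i_{v,j}=(\tilde w^i_{v,j,+}-\tilde w^i_{v,j,-})/\deg(v)$; (3) for each edge $(u,v)$ let $j^*$ maximize $|\tilde\phi^i_{u,j}-\tilde\phi^i_{v,j}|$ over $j\in[k]$ (ties arbitrary), set $f^i_{j^*}(u,v)=+1$ if $\tilde\phi^i_{u,j^*}>\tilde\phi^i_{v,j^*}$, $-1$ if $<$, $0$ otherwise, and $f^i_j(u,v)=0$ for $j\ne j^*$; (4) if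 $\sum_{j,v}\tilde\phi^i_{v,j}b_j(v)>\sum_{j,v}\tilde\phi^i_{v,j}(Bf^i_j)_v$, terminate; (5) $r^i_{v,j}=(b_j(v)-(Bf^i_j)_v)/\deg(v)$; (6) $w^{i+1}_{v,j,+}=w^i_{v,j,+}(1+\alpha r^i_{v,j})$, $w^{i+1}_{v,j,-}=w^i_{v,j,-}(1-\alpha r^i_{v,j})$. Write $r^{\le i}_{v,j}=\sum_{i'=1}^{i}r^{i'}_{v,j}$, with $r^{\le0}_{v,j}=0$. $\|b_j\|_1=\sum_v|b_j(v)|$. *)

theory Defs
  imports Main "HOL-Library.Multiset" Complex_Main
begin

text \<open>Graph: finite vertex set V, finite edge set E (an abstract edge type, so
multigraphs are allowed), each edge e oriented from src e to tgt e.
The degree counts incident edges (no loops).\<close>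

definition deg :: "'e set \<Rightarrow> ('e \<Rightarrow> 'v) \<Rightarrow> ('e \<Rightarrow> 'v) \<Rightarrow> 'v \<Rightarrow> real" where
  "deg E src tgt v = real (card {e \<in> E. src e = v \<or> tgt e = v})"

text \<open>(Bf)_v for a flow f on edges (column of edge e: +1 at src e, -1 at tgt e).\<close>
definition Bmul :: "'e set \<Rightarrow> ('e \<Rightarrow> 'v) \<Rightarrow> ('e \<Rightarrow> 'v) \<Rightarrow> ('e \<Rightarrow> real) \<Rightarrow> 'v \<Rightarrow> real" where
  "Bmul E src tgt f v =
     (\<Sum>e\<in>E. (if src e = v then f e else if tgt e = v then - f e else 0))"

definition trunc_w :: "nat \<Rightarrow> real \<Rightarrow> real" where
  "trunc_w n w = (if w \<ge> real n then w else 0)"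

definition phi_of :: "'v set \<Rightarrow> 'e set \<Rightarrow> ('e \<Rightarrow> 'v) \<Rightarrow> ('e \<Rightarrow> 'v)
    \<Rightarrow> ('v \<Rightarrow> nat \<Rightarrow> real) \<times> ('v \<Rightarrow> nat \<Rightarrow> real) \<Rightarrow> 'v \<Rightarrow> nat \<Rightarrow> real" where
  "phi_of V E src tgt w v j =
     (trunc_w (card V) (fst w v j) - trunc_w (card V) (snd w v j)) / deg E src tgt v"

text \<open>Step (3): flow given potentials phi and the chosen commodity sel e = j* of each edge.\<close>
definition flow_of :: "('e \<Rightarrow> 'v) \<Rightarrow> ('e \<Rightarrow> 'v) \<Rightarrow> ('v \<Rightarrow> nat \<Rightarrow> real)
    \<Rightarrow> ('e \<Rightarrow> nat) \<Rightarrow> nat \<Rightarrow> 'e \<Rightarrow> real" where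
  "flow_of src tgt phi sel j e =
     (if sel e = j then
        (if phi (src e) j > phi (tgt e) j then 1
         else if phi (src e) j < phi (tgt e) j then -1 else 0)
      else 0)"

definition r_of :: "'v set \<Rightarrow> 'e set \<Rightarrow> ('e \<Rightarrow> 'v) \<Rightarrow> ('e \<Rightarrow> 'v) \<Rightarrow> ('v \<Rightarrow> nat \<Rightarrow> real)
    \<Rightarrow> ('e \<Rightarrow> nat) \<Rightarrow> ('v \<Rightarrow> nat \<Rightarrow> real) \<times> ('v \<Rightarrow> nat \<Rightarrow> real) \<Rightarrow> 'v \<Rightarrow> nat \<Rightarrow> real" where
  "r_of V E src tgt b sel w v j =
     (b v j - Bmul E src tgt (flow_of src tgt (phi_of V E src tgt w) sel j) v) / deg E src tgt v"

text \<open>MC_w ... m is the weight pair (w_+, w_-) at the start of round m+1, i.e. w^{m+1}.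
sel i e is the commodity j* chosen for edge e in round i (i >= 1).\<close>
primrec MC_w :: "'v set \<Rightarrow> 'e set \<Rightarrow> ('e \<Rightarrow> 'v) \<Rightarrow> ('e \<Rightarrow> 'v) \<Rightarrow> ('v \<Rightarrow> nat \<Rightarrow> real)
    \<Rightarrow> real \<Rightarrow> (nat \<Rightarrow> 'e \<Rightarrow> nat) \<Rightarrow> nat \<Rightarrow> ('v \<Rightarrow> nat \<Rightarrow> real) \<times> ('v \<Rightarrow> nat \<Rightarrow> real)" where
  "MC_w V E src tgt b \<alpha> sel 0 = (\<lambda>v j. 1, \<lambda>v j. 1)"
| "MC_w V E src tgt b \<alpha> sel (Suc m) =
     (let w = MC_w V E src tgt b \<alpha> sel m;
          r = r_of V E src tgt b (sel (Suc m)) w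
      in (\<lambda>v j. fst w v j * (1 + \<alpha> * r v j), \<lambda>v j. snd w v j * (1 - \<alpha> * r v j)))"

definition MC_phi where
  "MC_phi V E src tgt b \<alpha> sel i = phi_of V E src tgt (MC_w V E src tgt b \<alpha> sel (i - 1))"

definition MC_f where
  "MC_f V E src tgt b \<alpha> sel i j = flow_of src tgt (MC_phi V E src tgt b \<alpha> sel i) (sel i) j"

definition MC_r where
  "MC_r V E src tgt b \<alpha> sel i = r_of V E src tgt b (sel i) (MC_w V E src tgt b \<alpha> sel (i - 1))"

definition MC_valid_sel where
  "MC_valid_sel V E src tgt b \<alpha> k sel i \<longleftrightarrow>
     (\<forall>e\<in>E. sel i e < k \<and>
        (\<forall>j<k. \<bar>MC_phi V E src tgt b \<alpha> sel i (src e) j - MC_phi V E src tgt b \<alpha> sel i (tgt e) j\<bar>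
             \<le> \<bar>MC_phi V E src tgt b \<alpha> sel i (src e) (sel i e) - MC_phi V E src tgt b \<alpha> sel i (tgt e) (sel i e)\<bar>))"

definition MC_terminates where
  "MC_terminates V E src tgt b \<alpha> k sel i \<longleftrightarrow>
     (\<Sum>j<k. \<Sum>v\<in>V. MC_phi V E src tgt b \<alpha> sel i v j * b v j)
       > (\<Sum>j<k. \<Sum>v\<in>V. MC_phi V E src tgt b \<alpha> sel i v j * Bmul E src tgt (MC_f V E src tgt b \<alpha> sel i j) v)"

end

theory Submission
  imports Defs
begin

text \<open>
  A positive potential \<open>\<phi>\<^sub>v\<^sub>j\<close> forces \<open>w\<^sub>+ \<ge> n \<ge> 3\<close>, and since
  \<open>w\<^sub>+ = \<Prod>(1 + \<alpha> r) \<le> exp (\<alpha> r\<^sup>\<le>)\<close> the cumulative residual \<open>r\<^sup>\<le>\<^sub>v\<^sub>j\<close> is at least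
  \<open>1/\<alpha> \<ge> 1\<close>, so \<open>x\<^sub>v = r\<^sup>\<le>\<^sub>v\<^sub>j deg v \<ge> deg v \<ge> |(Bf)\<^sub>v|\<close>; symmetrically for negative
  potentials. The flow sends one unit along each edge from the higher to the lower
  potential, so it can only push \<open>x\<close> towards zero where \<open>x\<close> is large; at a vertex of
  potential zero an edge may increase \<open>|x|\<close> by one, but then it decreases \<open>|x|\<close> by one
  at its other endpoint, whose potential is nonzero. Hence \<open>\<Sum>\<^sub>v |x\<^sub>v - (Bf)\<^sub>v|\<close> does not exceed \<open>\<Sum>\<^sub>v |x\<^sub>v|\<close>, and adding
  \<open>b\<close> in each round costs at most \<open>\<parallel>b\<^sub>j\<parallel>\<^sub>1\<close>.
\<close>

lemma Bmul_abs_le_deg: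
  assumes "finite E" "\<And>e. \<bar>f e\<bar> \<le> 1"
  shows "\<bar>Bmul E src tgt f v\<bar> \<le> deg E src tgt v"
proof -
  have "\<bar>Bmul E src tgt f v\<bar> \<le> (\<Sum>e\<in>E. \<bar>if src e = v then f e else if tgt e = v then - f e else 0\<bar>)"
    unfolding Bmul_def by (rule sum_abs)
  also have "\<dots> \<le> (\<Sum>e\<in>E. if src e = v \<or> tgt e = v then 1 else 0)"
    by (rule sum_mono) (use assms(2) in auto)
  also have "\<dots> = deg E src tgt v"
    unfolding deg_def using assms(1) by (simp add: sum.inter_filter[symmetric])
  finally show ?thesis .
qed

lemma flow_of_abs_le_1: "\<bar>flow_of src tgt \<phi> s j e\<bar> \<le> 1"
  unfolding flow_of_def by auto

lemma sum_abs_diff_Bmul_flow_of_le: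
  fixes x :: "'v \<Rightarrow> real"
  assumes fV: "finite V" and fE: "finite E"
    and EV: "\<forall>e\<in>E. src e \<in> V \<and> tgt e \<in> V \<and> src e \<noteq> tgt e"
    and pos: "\<forall>v\<in>V. \<phi> v j > 0 \<longrightarrow> deg E src tgt v \<le> x v"
    and neg: "\<forall>v\<in>V. \<phi> v j < 0 \<longrightarrow> x v \<le> - deg E src tgt v"
  shows "(\<Sum>v\<in>V. \<bar>x v - Bmul E src tgt (flow_of src tgt \<phi> s j) v\<bar>) \<le> (\<Sum>v\<in>V. \<bar>x v\<bar>)"
proof -
  define f where "f = flow_of src tgt \<phi> s j"
  define c where "c e v = (if src e = v then f e else if tgt e = v then - f e else 0)" for e v
  \<comment> \<open>\<open>d v e\<close> bounds the change of \<open>|x v|\<close> caused by edge \<open>e\<close>.\<close>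
  define d where "d v e = (if \<phi> v j > 0 then - c e v else if \<phi> v j < 0 then c e v else \<bar>c e v\<bar>)"
    for v e
  have B: "Bmul E src tgt f v = (\<Sum>e\<in>E. c e v)" for v
    unfolding Bmul_def c_def by simp
  have vertex: "\<bar>x v - Bmul E src tgt f v\<bar> \<le> \<bar>x v\<bar> + (\<Sum>e\<in>E. d v e)" if "v \<in> V" for v
  proof -
    have bnd: "\<bar>Bmul E src tgt f v\<bar> \<le> deg E src tgt v"
      unfolding f_def by (rule Bmul_abs_le_deg[OF fE flow_of_abs_le_1])
    consider "\<phi> v j > 0" | "\<phi> v j < 0" | "\<phi> v j = 0" by linarith
    then show ?thesis
    proof cases
      case 1
      then have "(\<Sum>e\<in>E. d v e) = - Bmul E src tgt f v"
        unfolding d_def B by (simp add: sum_negf)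
      then show ?thesis using 1 pos that bnd by auto
    next
      case 2
      then have "(\<Sum>e\<in>E. d v e) = Bmul E src tgt f v"
        unfolding d_def B by simp
      then show ?thesis using 2 neg that bnd by auto
    next
      case 3
      then have "(\<Sum>e\<in>E. d v e) = (\<Sum>e\<in>E. \<bar>c e v\<bar>)"
        unfolding d_def by simp
      moreover have "\<bar>Bmul E src tgt f v\<bar> \<le> (\<Sum>e\<in>E. \<bar>c e v\<bar>)"
        unfolding B by (rule sum_abs)
      ultimately show ?thesis by linarith
    qed
  qed
  have edge: "(\<Sum>v\<in>V. d v e) \<le> 0" if "e \<in> E" for e
  proof -
    have "src e \<in> V" "tgt e \<in> V" and st: "src e \<noteq> tgt e"
      using EV that by auto
    then have "(\<Sum>v\<in>V. d v e) = d (src e) e + d (tgt e) e"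
      by (subst sum.mono_neutral_right[OF fV, of "{src e, tgt e}"])
         (auto simp: d_def c_def)
    also have "\<dots> \<le> 0"
      using st unfolding d_def c_def f_def flow_of_def by auto
    finally show ?thesis .
  qed
  have "(\<Sum>v\<in>V. \<bar>x v - Bmul E src tgt f v\<bar>) \<le> (\<Sum>v\<in>V. \<bar>x v\<bar> + (\<Sum>e\<in>E. d v e))"
    by (rule sum_mono) (rule vertex)
  also have "\<dots> = (\<Sum>v\<in>V. \<bar>x v\<bar>) + (\<Sum>e\<in>E. \<Sum>v\<in>V. d v e)"
    by (simp add: sum.distrib sum.swap[of _ V E])
  also have "\<dots> \<le> (\<Sum>v\<in>V. \<bar>x v\<bar>)"
    using sum_nonpos[of E "\<lambda>e. \<Sum>v\<in>V. d v e"] edge by auto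
  finally show ?thesis unfolding f_def .
qed

lemma MC_w_eq_prod:
  "fst (MC_w V E src tgt b \<alpha> sel m) v j = (\<Prod>t=1..m. 1 + \<alpha> * MC_r V E src tgt b \<alpha> sel t v j)"
  "snd (MC_w V E src tgt b \<alpha> sel m) v j = (\<Prod>t=1..m. 1 - \<alpha> * MC_r V E src tgt b \<alpha> sel t v j)"
  by (induction m arbitrary: v j) (simp_all add: Let_def MC_r_def prod.cl_ivl_Suc)

lemma MC_r_mult_deg:
  assumes "deg E src tgt v \<noteq> 0"
  shows "MC_r V E src tgt b \<alpha> sel (Suc m) v j * deg E src tgt v
    = b v j - Bmul E src tgt
        (flow_of src tgt (phi_of V E src tgt (MC_w V E src tgt b \<alpha> sel m)) (sel (Suc m)) j) v"
  using assms unfolding MC_r_def r_of_def by simp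

lemma MC_r_abs_le_2:
  assumes "finite E" "deg E src tgt v \<ge> 1" "\<bar>b v j\<bar> \<le> deg E src tgt v"
  shows "\<bar>MC_r V E src tgt b \<alpha> sel t v j\<bar> \<le> 2"
proof -
  let ?B = "Bmul E src tgt (flow_of src tgt (phi_of V E src tgt (MC_w V E src tgt b \<alpha> sel (t - 1))) (sel t) j) v"
  have "\<bar>?B\<bar> \<le> deg E src tgt v"
    by (rule Bmul_abs_le_deg[OF assms(1) flow_of_abs_le_1])
  then have "\<bar>b v j - ?B\<bar> \<le> 2 * deg E src tgt v"
    using assms by linarith
  then show ?thesis
    using assms(2) unfolding MC_r_def r_of_def by (simp add: abs_divide divide_le_eq)
qed

lemma prod_one_plus_le_exp_sum:
  fixes a :: "'a \<Rightarrow> real"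
  assumes "\<And>t. 0 \<le> 1 + a t"
  shows "(\<Prod>t\<in>I. 1 + a t) \<le> exp (\<Sum>t\<in>I. a t)"
proof (cases "finite I")
  case True
  have "(\<Prod>t\<in>I. 1 + a t) \<le> (\<Prod>t\<in>I. exp (a t))"
    by (rule prod_mono) (use assms in auto)
  then show ?thesis using True by (simp add: exp_sum)
qed simp

lemma trunc_w_diff_pos_imp_ge:
  assumes "trunc_w n a - trunc_w n c > 0"
  shows "real n \<le> a"
  using assms unfolding trunc_w_def by (auto split: if_splits)

lemma MC_w_le_exp:
  assumes fE: "finite E" and dg: "deg E src tgt v \<ge> 1" and bv: "\<bar>b v j\<bar> \<le> deg E src tgt v"
    and a0: "0 < \<alpha>" and a1: "\<alpha> \<le> 1/4"
  shows "fst (MC_w V E src tgt b \<alpha> sel m) v j \<le> exp (\<alpha> * (\<Sum>t=1..m. MC_r V E src tgt b \<alpha> sel t v j))"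
    and "snd (MC_w V E src tgt b \<alpha> sel m) v j \<le> exp (- \<alpha> * (\<Sum>t=1..m. MC_r V E src tgt b \<alpha> sel t v j))"
proof -
  let ?r = "\<lambda>t. MC_r V E src tgt b \<alpha> sel t v j"
  have "\<alpha> * \<bar>?r t\<bar> \<le> 1/4 * 2" for t
    using MC_r_abs_le_2[where V=V and E=E and src=src and tgt=tgt and v=v and b=b and j=j
        and \<alpha>=\<alpha> and sel=sel and t=t, OF fE dg bv] a0 a1
    by (intro mult_mono) auto
  then have small: "\<bar>\<alpha> * ?r t\<bar> \<le> 1/2" for t
    using a0 by (simp add: abs_mult)
  have "0 \<le> 1 + \<alpha> * ?r t" "0 \<le> 1 + - \<alpha> * ?r t" for t
    using small[of t] by (auto simp: abs_le_iff)
  from this[THEN prod_one_plus_le_exp_sum]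
  show "fst (MC_w V E src tgt b \<alpha> sel m) v j \<le> exp (\<alpha> * (\<Sum>t=1..m. ?r t))"
    and "snd (MC_w V E src tgt b \<alpha> sel m) v j \<le> exp (- \<alpha> * (\<Sum>t=1..m. ?r t))"
    by (simp_all add: MC_w_eq_prod sum_distrib_left)
qed

lemma MC_phi_sign_imp_cumulative_residual:
  fixes m :: nat and sel :: "nat \<Rightarrow> 'e \<Rightarrow> nat"
  assumes fE: "finite E" and dg: "deg E src tgt v \<ge> 1" and bv: "\<bar>b v j\<bar> \<le> deg E src tgt v"
    and a0: "0 < \<alpha>" and a1: "\<alpha> \<le> 1/4" and cV: "card V \<ge> 3"
  defines "w \<equiv> MC_w V E src tgt b \<alpha> sel m"
    and "S \<equiv> \<Sum>t=1..m. MC_r V E src tgt b \<alpha> sel t v j"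
  shows "phi_of V E src tgt w v j > 0 \<Longrightarrow> 1 \<le> S"
    and "phi_of V E src tgt w v j < 0 \<Longrightarrow> S \<le> -1"
proof -
  note w_le_exp = MC_w_le_exp[where V=V and E=E and src=src and tgt=tgt and v=v and b=b
      and j=j and sel=sel and m=m, OF fE dg bv a0 a1, folded w_def S_def]
  have ge_exp1: "exp 1 \<le> a" if "trunc_w (card V) a - trunc_w (card V) c > 0" for a c
    using trunc_w_diff_pos_imp_ge[OF that] exp_le cV by linarith
  have deg_pos: "deg E src tgt v > 0"
    using dg by linarith
  show "1 \<le> S" if "phi_of V E src tgt w v j > 0"
  proof -
    have "exp 1 \<le> fst w v j"
      using that deg_pos by (intro ge_exp1) (simp add: phi_of_def zero_less_divide_iff)
    from order.trans[OF this w_le_exp(1)] have "1 \<le> \<alpha> * S"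
      by simp
    moreover have "\<alpha> * S \<le> \<alpha> * 1" if "S \<le> 1"
      using a0 that by (intro mult_left_mono) auto
    ultimately show ?thesis
      using a1 by linarith
  qed
  show "S \<le> -1" if "phi_of V E src tgt w v j < 0"
  proof -
    have "exp 1 \<le> snd w v j"
      using that deg_pos by (intro ge_exp1) (simp add: phi_of_def divide_less_0_iff)
    from order.trans[OF this w_le_exp(2)] have "1 \<le> - \<alpha> * S"
      by simp
    moreover have "\<alpha> * (-1) \<le> \<alpha> * S" if "-1 \<le> S"
      using a0 that by (intro mult_left_mono) auto
    ultimately show ?thesis
      using a1 by linarith
  qed
qed

lemma MC_cumulative_residual_Suc_le:
  assumes fV: "finite V" and fE: "finite E" and cV: "card V \<ge> 3"
    and EV: "\<forall>e\<in>E. src e \<in> V \<and> tgt e \<in> V \<and> src e \<noteq> tgt e"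
    and dg: "\<forall>v\<in>V. deg E src tgt v \<ge> 1" and bv: "\<forall>v\<in>V. \<bar>b v j\<bar> \<le> deg E src tgt v"
    and a0: "0 < \<alpha>" and a1: "\<alpha> \<le> 1/4"
  shows "(\<Sum>v\<in>V. \<bar>\<Sum>t=1..Suc m. MC_r V E src tgt b \<alpha> sel t v j\<bar> * deg E src tgt v)
    \<le> (\<Sum>v\<in>V. \<bar>\<Sum>t=1..m. MC_r V E src tgt b \<alpha> sel t v j\<bar> * deg E src tgt v) + (\<Sum>v\<in>V. \<bar>b v j\<bar>)"
proof -
  let ?S = "\<lambda>m v. \<Sum>t=1..m. MC_r V E src tgt b \<alpha> sel t v j"
  let ?d = "deg E src tgt"
  let ?\<phi> = "phi_of V E src tgt (MC_w V E src tgt b \<alpha> sel m)"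
  let ?B = "Bmul E src tgt (flow_of src tgt ?\<phi> (sel (Suc m)) j)"
  define x where "x v = ?S m v * ?d v" for v
  have abs_x: "\<bar>x v\<bar> = \<bar>?S m v\<bar> * ?d v" if "v \<in> V" for v
    using dg that unfolding x_def by (fastforce simp: abs_mult)
  have abs_Suc: "\<bar>?S (Suc m) v\<bar> * ?d v = \<bar>x v - ?B v + b v j\<bar>" if "v \<in> V" for v
  proof -
    have "?S (Suc m) v * ?d v = x v + MC_r V E src tgt b \<alpha> sel (Suc m) v j * ?d v"
      unfolding x_def by (simp add: distrib_right)
    also have "\<dots> = x v - ?B v + b v j"
      using dg that by (subst MC_r_mult_deg) fastforce+
    finally have "\<bar>?S (Suc m) v * ?d v\<bar> = \<bar>x v - ?B v + b v j\<bar>"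
      by simp
    moreover have "0 \<le> ?d v"
      using dg that by fastforce
    ultimately show ?thesis
      by (simp add: abs_mult)
  qed
  have "(\<Sum>v\<in>V. \<bar>x v - ?B v\<bar>) \<le> (\<Sum>v\<in>V. \<bar>x v\<bar>)"
  proof (rule sum_abs_diff_Bmul_flow_of_le[OF fV fE EV]; intro ballI impI)
    fix v assume v: "v \<in> V"
    note sign = MC_phi_sign_imp_cumulative_residual[OF fE _ _ a0 a1 cV, of src tgt v b j]
    show "?d v \<le> x v" if "?\<phi> v j > 0"
      using mult_right_mono[OF sign(1)[OF _ _ that]] dg bv v unfolding x_def by force
    show "x v \<le> - ?d v" if "?\<phi> v j < 0"
      using mult_right_mono[OF sign(2)[OF _ _ that]] dg bv v unfolding x_def by force
  qed
  then have "(\<Sum>v\<in>V. \<bar>x v - ?B v + b v j\<bar>) \<le> (\<Sum>v\<in>V. \<bar>x v\<bar>) + (\<Sum>v\<in>V. \<bar>b v j\<bar>)"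
    using sum_mono[of V "\<lambda>v. \<bar>x v - ?B v + b v j\<bar>" "\<lambda>v. \<bar>x v - ?B v\<bar> + \<bar>b v j\<bar>"]
    by (simp add: abs_triangle_ineq sum.distrib)
  then show ?thesis
    using abs_x abs_Suc by (simp cong: sum.cong)
qed

theorem lemma2p14:
  fixes V :: "'v set" and E :: "'e set" and src tgt :: "'e \<Rightarrow> 'v"
    and k T i :: nat and b :: "'v \<Rightarrow> nat \<Rightarrow> real" and \<alpha> :: real
    and sel :: "nat \<Rightarrow> 'e \<Rightarrow> nat" and j :: nat
  assumes "finite V" and "finite E" and "card V \<ge> 3"
    and "\<forall>e\<in>E. src e \<in> V \<and> tgt e \<in> V \<and> src e \<noteq> tgt e"
    and "\<forall>v\<in>V. deg E src tgt v \<ge> 1"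
    and "k \<ge> 1"
    and "\<forall>v\<in>V. \<forall>j'<k. \<bar>b v j'\<bar> \<le> deg E src tgt v"
    and "0 < \<alpha>" and "\<alpha> \<le> 1/4"
    and "T \<ge> 1"
    and "j < k"
    and "i \<le> T"
    and "\<forall>i'\<in>{1..i}. MC_valid_sel V E src tgt b \<alpha> k sel i'"
    and "\<forall>i'\<in>{1..i}. \<not> MC_terminates V E src tgt b \<alpha> k sel i'"
  shows "(\<Sum>v\<in>V. \<bar>\<Sum>i'=1..i. MC_r V E src tgt b \<alpha> sel i' v j\<bar> * deg E src tgt v)
           \<le> real i * (\<Sum>v\<in>V. \<bar>b v j\<bar>)"
proof (induction i)
  case 0
  then show ?case by simp
next
  case (Suc m)
  have "\<forall>v\<in>V. \<bar>b v j\<bar> \<le> deg E src tgt v"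
    using assms(7,11) by blast
  from MC_cumulative_residual_Suc_le[where V=V and E=E and src=src and tgt=tgt and b=b and j=j
      and \<alpha>=\<alpha> and sel=sel and m=m, OF assms(1-5) this assms(8,9)] Suc.IH
  show ?case by (simp add: algebra_simps)
qed

end
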